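(* Let $(\Omega,\mathcal F,\mathbb P)$ be a probability space. For each $N\in\mathbb N$ let $\{t_j\}_{j\in\mathbb N}=\{t_j^{(N)}\}_{j\in\mathbb N}$ be a sequence of positive random variables on it (dependence on $N$ suppressed) satisfying: (i) $\mathbb E(t_i)=\frac1N$ for all $i$ and all $N$; (ii) there exist $r>0$ and a constant $\tilde C>0$ such that $\mathbb E(t_i^{2+r})\le \frac{\tilde C}{N^{2+r}}$ for all $i$ and all $N$; (iii) for all $m\in\mathbb N$ (and all $N$), the vector $(t_1,\dots,t_m)$ is negatively superadditive dependent. Let $\tau_i=\sum_{j=1}^i t_j$ for $i\ge1$ and $N(1)=\sum_{j\ge1}\mathbf 1_{\tau_j\le1}$. Then, almost surely as $N\to\infty$, $\frac{N(1)}{N}\to1$ and $|\tau_{N(1)}-\tau_N|\to0$.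
   Context: A function $\phi:\mathbb R^m\to\mathbb R$ is superadditive if $\phi(x\vee y)+\phi(x\wedge y)\ge\phi(x)+\phi(y)$ for all $x,y\in\mathbb R^m$, where $\vee$ and $\wedge$ denote componentwise maximum and minimum. A random vector $(X_1,\dots,X_m)$ is negatively superadditive dependent (NSD) if for every superadditive $\phi$ such that the expectation $\mathbb E\phi(X_1,\dots,X_m)$ exists, $\mathbb E\phi(X_1,\dots,X_m)\le\mathbb E\phi(X_1^*,\dots,X_m^* )$, where $X_1^*,\dots,X_m^*$ are independent and $X_i^*$ has the same distribution as $X_i$ for each $i$. Here $\tau_0=0$ by convention. *)

theory Defs
  imports "HOL-Probability.Probability"
begin

definition superadditive_on :: "nat set \<Rightarrow> ((nat \<Rightarrow> real) \<Rightarrow> real) \<Rightarrow> bool" where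
  "superadditive_on I \<phi> \<longleftrightarrow>
     (\<forall>x \<in> PiE I (\<lambda>_. UNIV). \<forall>y \<in> PiE I (\<lambda>_. UNIV).
        \<phi> x + \<phi> y \<le> \<phi> (\<lambda>i\<in>I. max (x i) (y i)) + \<phi> (\<lambda>i\<in>I. min (x i) (y i)))"

text \<open>Negative superadditive dependence of the random vector (X i)_{i \<in> I} on M:
  for every (Borel measurable) superadditive \<phi> whose expectations exist, E \<phi>(X) \<le> E \<phi>(X*),
  where X* has independent coordinates with the same marginals (product of the marginal laws).\<close>
definition nsd :: "'a measure \<Rightarrow> (nat \<Rightarrow> 'a \<Rightarrow> real) \<Rightarrow> nat set \<Rightarrow> bool" where
  "nsd M X I \<longleftrightarrow>
     (\<forall>\<phi>. superadditive_on I \<phi>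
        \<and> \<phi> \<in> borel_measurable (PiM I (\<lambda>_. borel))
        \<and> integrable M (\<lambda>\<omega>. \<phi> (\<lambda>i\<in>I. X i \<omega>))
        \<and> integrable (PiM I (\<lambda>i. distr M borel (X i))) \<phi>
        \<longrightarrow> (\<integral>\<omega>. \<phi> (\<lambda>i\<in>I. X i \<omega>) \<partial>M)
            \<le> (\<integral>x. \<phi> x \<partial>(PiM I (\<lambda>i. distr M borel (X i)))))"

definition tau :: "(nat \<Rightarrow> 'a \<Rightarrow> real) \<Rightarrow> nat \<Rightarrow> 'a \<Rightarrow> real" where
  "tau t i \<omega> = (\<Sum>j\<in>{1..i}. t j \<omega>)"

text \<open>The index set {j \<ge> 1. \<tau>_j \<le> 1}; N(1) is its cardinality (when finite).\<close>
definition count_set :: "(nat \<Rightarrow> 'a \<Rightarrow> real) \<Rightarrow> 'a \<Rightarrow> nat set" where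
  "count_set t \<omega> = {j. 1 \<le> j \<and> tau t j \<omega> \<le> 1}"

end

theory Submission
  imports Defs "HOL-Real_Asymp.Real_Asymp"
begin

text \<open>For monotone \<open>h\<close> the function \<open>x \<mapsto> exp (l * (\<Sum>i. h (x i)))\<close> is superadditive, so
  negative superadditive dependence bounds exponential moments of partial sums by those of
  independent copies. The \<open>(2 + r)\<close>-th moment bound gives second moments \<open>O(1 / N\<^sup>2)\<close>, and
  Chernoff bounds at \<open>\<plusminus>N powr \<alpha>\<close> (for the upper tail after truncating the summands at
  \<open>N powr - \<alpha>\<close>, which by Markov's inequality they exceed only with summable probability) show
  that \<open>P(\<exists>n \<le> 3 N. \<bar>\<tau>\<^sub>n - n / N\<bar> \<ge> \<epsilon>)\<close> is summable in \<open>N\<close>. By Borel-Cantelli, almost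
  surely \<open>\<tau>\<^sub>n - n / N \<rightarrow> 0\<close> uniformly in \<open>n \<le> 3 N\<close>. Then \<open>\<tau>\<^sub>3\<^sub>N > 1\<close>, so the count
  \<open>c = N(1)\<close> is below \<open>3 N\<close>, and \<open>\<tau>\<^sub>c \<le> 1 < \<tau>\<^sub>c\<^sub>+\<^sub>1\<close> pins \<open>c / N\<close> and \<open>\<tau>\<^sub>c\<close> near \<open>1\<close>.\<close>

lemma exp_add_exp_le_of_majorized:
  fixes p q c d :: real
  assumes "p + q = c + d" and "min c d \<le> p" and "min c d \<le> q"
  shows "exp p + exp q \<le> exp c + exp d"
proof -
  have *: "exp p + exp q \<le> exp a + exp b" if "p + q = a + b" "a \<le> p" "a \<le> q" for a b
  proof -
    have eb: "exp b = exp p * exp q / exp a"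
      using that(1) by (simp add: exp_add [symmetric] exp_diff [symmetric] algebra_simps)
    have "0 \<le> (exp p - exp a) * (exp q - exp a) / exp a"
      using that by (intro divide_nonneg_pos mult_nonneg_nonneg) auto
    also have "\<dots> = exp a + exp b - exp p - exp q"
      by (simp add: eb field_simps)
    finally show ?thesis by simp
  qed
  show ?thesis
  proof (cases "c \<le> d")
    case True
    then show ?thesis using assms * [of c d] by simp
  next
    case False
    then show ?thesis using assms * [of d c] by simp
  qed
qed

lemma superadditive_on_exp_sum_mono:
  fixes h :: "real \<Rightarrow> real"
  assumes "mono h"
  shows "superadditive_on I (\<lambda>x. exp (l * (\<Sum>i\<in>I. h (x i))))"
  unfolding superadditive_on_def
proof (intro ballI)
  fix x y :: "nat \<Rightarrow> real"
  define u v a b where "u = (\<Sum>i\<in>I. h (x i))" and "v = (\<Sum>i\<in>I. h (y i))"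
    and "a = (\<Sum>i\<in>I. h (min (x i) (y i)))" and "b = (\<Sum>i\<in>I. h (max (x i) (y i)))"
  have "u + v = a + b"
    unfolding u_def v_def a_def b_def sum.distrib [symmetric]
    by (intro sum.cong) (auto simp: max_def min_def)
  moreover have "a \<le> u" "u \<le> b" "a \<le> v" "v \<le> b"
    unfolding u_def v_def a_def b_def by (auto intro!: sum_mono monoD [OF assms])
  then have "min (l * a) (l * b) \<le> l * u" "min (l * a) (l * b) \<le> l * v"
    by (cases "0 \<le> l"; force simp: min_le_iff_disj intro: mult_left_mono mult_left_mono_neg)+
  ultimately have "exp (l * u) + exp (l * v) \<le> exp (l * a) + exp (l * b)"
    by (intro exp_add_exp_le_of_majorized) (simp_all add: distrib_left [symmetric])
  moreover have "(\<Sum>i\<in>I. h ((\<lambda>i\<in>I. max (x i) (y i)) i)) = b"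
    "(\<Sum>i\<in>I. h ((\<lambda>i\<in>I. min (x i) (y i)) i)) = a"
    unfolding a_def b_def by (auto intro: sum.cong)
  ultimately show "exp (l * (\<Sum>i\<in>I. h (x i))) + exp (l * (\<Sum>i\<in>I. h (y i)))
      \<le> exp (l * (\<Sum>i\<in>I. h ((\<lambda>i\<in>I. max (x i) (y i)) i)))
        + exp (l * (\<Sum>i\<in>I. h ((\<lambda>i\<in>I. min (x i) (y i)) i)))"
    by (simp add: u_def v_def)
qed

lemma (in prob_space) integral_PiM_distr_prod:
  fixes X :: "'i \<Rightarrow> 'a \<Rightarrow> real" and g :: "'i \<Rightarrow> real \<Rightarrow> real"
  assumes fin: "finite I" and X: "\<And>i. i \<in> I \<Longrightarrow> random_variable borel (X i)"
    and g: "\<And>i. i \<in> I \<Longrightarrow> g i \<in> borel_measurable borel"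
    and bounded: "\<And>i x. i \<in> I \<Longrightarrow> \<bar>g i x\<bar> \<le> B"
  shows "(\<integral>x. (\<Prod>i\<in>I. g i (x i)) \<partial>PiM I (\<lambda>i. distr M borel (X i)))
    = (\<Prod>i\<in>I. expectation (\<lambda>\<omega>. g i (X i \<omega>)))"
proof -
  \<comment> \<open>Redefine the laws outside I so that they form a product of probability spaces.\<close>
  define L where "L i = distr M borel (\<lambda>\<omega>. if i \<in> I then X i \<omega> else 0)" for i
  have L: "prob_space (L i)" for i
    unfolding L_def by (intro prob_space_distr) (cases "i \<in> I"; simp add: X)
  interpret product_sigma_finite L
    unfolding product_sigma_finite_def using L by (simp add: prob_space_imp_sigma_finite)
  have "PiM I (\<lambda>i. distr M borel (X i)) = PiM I L"
    unfolding L_def by (intro PiM_cong) (auto intro!: distr_cong)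
  moreover have "(\<integral>x. (\<Prod>i\<in>I. g i (x i)) \<partial>PiM I L) = (\<Prod>i\<in>I. \<integral>y. g i y \<partial>L i)"
  proof (rule product_integral_prod [OF fin])
    fix i assume "i \<in> I"
    interpret Li: prob_space "L i" by (fact L)
    show "integrable (L i) (g i)"
      using \<open>i \<in> I\<close> bounded g by (intro Li.integrable_const_bound [where B = B]) (auto simp: L_def)
  qed
  moreover have "(\<integral>y. g i y \<partial>L i) = expectation (\<lambda>\<omega>. g i (X i \<omega>))" if "i \<in> I" for i
  proof -
    have "L i = distr M borel (X i)"
      unfolding L_def using that by (intro distr_cong) auto
    then show ?thesis using that X g by (simp add: integral_distr)
  qed
  ultimately show ?thesis by simp
qed

lemma (in prob_space) nsd_expectation_le_of_bounded:
  fixes X :: "nat \<Rightarrow> 'a \<Rightarrow> real" and \<phi> :: "(nat \<Rightarrow> real) \<Rightarrow> real"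
  assumes nsd: "nsd M X I" and X: "\<And>i. i \<in> I \<Longrightarrow> random_variable borel (X i)"
    and \<phi>: "superadditive_on I \<phi>" "\<phi> \<in> borel_measurable (PiM I (\<lambda>_. borel))"
    and bounded: "\<And>x. \<bar>\<phi> x\<bar> \<le> B"
  shows "expectation (\<lambda>\<omega>. \<phi> (\<lambda>i\<in>I. X i \<omega>)) \<le> (\<integral>x. \<phi> x \<partial>PiM I (\<lambda>i. distr M borel (X i)))"
proof -
  define P where "P = PiM I (\<lambda>i. distr M borel (X i))"
  interpret P: prob_space P
    unfolding P_def by (intro prob_space_PiM prob_space_distr X)
  have "sets P = sets (PiM I (\<lambda>_. borel))"
    unfolding P_def by (intro sets_PiM_cong) auto
  then have "\<phi> \<in> borel_measurable P"
    using \<phi>(2) measurable_cong_sets by blast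
  then have "integrable P \<phi>"
    using bounded by (intro P.integrable_const_bound [where B = B]) auto
  moreover have "(\<lambda>\<omega>. \<lambda>i\<in>I. X i \<omega>) \<in> M \<rightarrow>\<^sub>M PiM I (\<lambda>_. borel)"
    using X by (intro measurable_restrict) auto
  then have "integrable M (\<lambda>\<omega>. \<phi> (\<lambda>i\<in>I. X i \<omega>))"
    using bounded \<phi>(2) by (intro integrable_const_bound [where B = B]) auto
  ultimately show ?thesis
    using nsd \<phi> unfolding nsd_def P_def by blast
qed

lemma (in prob_space) nsd_expectation_exp_sum_le:
  fixes X :: "nat \<Rightarrow> 'a \<Rightarrow> real" and h :: "real \<Rightarrow> real"
  assumes nsd: "nsd M X I" and fin: "finite I" and X: "\<And>i. i \<in> I \<Longrightarrow> random_variable borel (X i)"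
    and h: "mono h" "h \<in> borel_measurable borel" and bounded: "\<And>x. l * h x \<le> B"
  shows "expectation (\<lambda>\<omega>. exp (l * (\<Sum>i\<in>I. h (X i \<omega>))))
    \<le> (\<Prod>i\<in>I. expectation (\<lambda>\<omega>. exp (l * h (X i \<omega>))))"
proof -
  define \<phi> where "\<phi> x = exp (l * (\<Sum>i\<in>I. h (x i)))" for x :: "nat \<Rightarrow> real"
  have [measurable]: "h \<in> borel_measurable borel" by (fact h(2))
  have "superadditive_on I \<phi>"
    unfolding \<phi>_def by (rule superadditive_on_exp_sum_mono [OF h(1)])
  moreover have "\<phi> \<in> borel_measurable (PiM I (\<lambda>_. borel))"
    unfolding \<phi>_def by measurable
  moreover have "\<bar>\<phi> x\<bar> \<le> exp (real (card I) * B)" for x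
  proof -
    have "l * (\<Sum>i\<in>I. h (x i)) \<le> (\<Sum>i\<in>I. B)"
      unfolding sum_distrib_left by (intro sum_mono bounded)
    then show ?thesis by (simp add: \<phi>_def)
  qed
  ultimately have "expectation (\<lambda>\<omega>. \<phi> (\<lambda>i\<in>I. X i \<omega>))
      \<le> (\<integral>x. \<phi> x \<partial>PiM I (\<lambda>i. distr M borel (X i)))"
    using nsd_expectation_le_of_bounded [OF nsd X] by blast
  moreover have "\<phi> (\<lambda>i\<in>I. X i \<omega>) = exp (l * (\<Sum>i\<in>I. h (X i \<omega>)))" for \<omega>
    unfolding \<phi>_def by (auto intro!: sum.cong)
  ultimately have "expectation (\<lambda>\<omega>. exp (l * (\<Sum>i\<in>I. h (X i \<omega>))))
      \<le> (\<integral>x. \<phi> x \<partial>PiM I (\<lambda>i. distr M borel (X i)))"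
    by simp
  also have "\<dots> = (\<integral>x. (\<Prod>i\<in>I. exp (l * h (x i))) \<partial>PiM I (\<lambda>i. distr M borel (X i)))"
    by (simp add: \<phi>_def exp_sum sum_distrib_left fin)
  also have "\<dots> = (\<Prod>i\<in>I. expectation (\<lambda>\<omega>. exp (l * h (X i \<omega>))))"
    using bounded by (intro integral_PiM_distr_prod [where B = "exp B"] fin X) auto
  finally show ?thesis .
qed

lemma exp_le_one_plus_plus_square:
  fixes x :: real
  assumes "x \<le> 1"
  shows "exp x \<le> 1 + x + x\<^sup>2"
proof (cases "0 \<le> x")
  case True
  then show ?thesis using assms by (rule exp_bound)
next
  case False
  have "exp x = inverse (exp (- x))" by (simp add: exp_minus)
  also have "\<dots> \<le> inverse (1 - x)"
    using False exp_ge_add_one_self [of "- x"] by (intro le_imp_inverse_le) auto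
  also have "\<dots> \<le> 1 + x + x\<^sup>2"
  proof -
    have "(1 - x) * (1 + x + x\<^sup>2) = 1 - x * x\<^sup>2"
      by (simp add: algebra_simps power2_eq_square)
    moreover have "x * x\<^sup>2 \<le> 0"
      using False by (simp add: mult_nonpos_nonneg)
    ultimately have "1 \<le> (1 - x) * (1 + x + x\<^sup>2)" by simp
    then show ?thesis using False by (simp add: field_simps)
  qed
  finally show ?thesis .
qed

lemma square_le_powr_moment:
  fixes x n r :: real
  assumes "0 < x" "0 < n" "0 \<le> r"
  shows "x\<^sup>2 \<le> 1 / n\<^sup>2 + n powr r * x powr (2 + r)"
proof (cases "x \<le> 1 / n")
  case True
  then have "x\<^sup>2 \<le> 1 / n\<^sup>2"
    using assms power_mono [OF True] by (simp add: power_divide)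
  then show ?thesis by (simp add: add_increasing2)
next
  case False
  then have "1 \<le> (n * x) powr r"
    using assms by (intro ge_one_powr_ge_zero) (auto simp: field_simps)
  then have "x\<^sup>2 \<le> x\<^sup>2 * (n * x) powr r"
    using mult_left_mono [of 1 "(n * x) powr r" "x\<^sup>2"] by simp
  also have "\<dots> = n powr r * x powr (2 + r)"
    using assms by (simp add: powr_add powr_mult powr_numeral field_simps)
  finally show ?thesis by (simp add: add_increasing)
qed

lemma (in prob_space) prob_ge_le_exp_moment:
  fixes f :: "'a \<Rightarrow> real"
  assumes "0 < l" and [measurable]: "random_variable borel f"
    and "integrable M (\<lambda>\<omega>. exp (l * f \<omega>))"
  shows "prob {\<omega>\<in>space M. a \<le> f \<omega>} \<le> expectation (\<lambda>\<omega>. exp (l * f \<omega>)) / exp (l * a)"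
proof -
  have "{\<omega>\<in>space M. a \<le> f \<omega>} = {\<omega>\<in>space M. exp (l * a) \<le> exp (l * f \<omega>)}"
    using assms(1) by auto
  then show ?thesis
    using assms integral_Markov_inequality_measure [of M "\<lambda>\<omega>. exp (l * f \<omega>)" "space M" "exp (l * a)"]
    by simp
qed

lemma (in prob_space) expectation_exp_le:
  fixes Y :: "'a \<Rightarrow> real"
  assumes [measurable]: "random_variable borel Y"
    and "integrable M Y" "integrable M (\<lambda>\<omega>. (Y \<omega>)\<^sup>2)"
    and bounded: "\<And>\<omega>. \<omega> \<in> space M \<Longrightarrow> l * Y \<omega> \<le> 1"
  shows "expectation (\<lambda>\<omega>. exp (l * Y \<omega>)) \<le> exp (l * expectation Y + l\<^sup>2 * expectation (\<lambda>\<omega>. (Y \<omega>)\<^sup>2))"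
proof -
  have "integrable M (\<lambda>\<omega>. exp (l * Y \<omega>))"
    using bounded by (intro integrable_const_bound [where B = "exp 1"]) auto
  moreover have "integrable M (\<lambda>\<omega>. 1 + l * Y \<omega> + l\<^sup>2 * (Y \<omega>)\<^sup>2)"
    using assms by auto
  ultimately have "expectation (\<lambda>\<omega>. exp (l * Y \<omega>)) \<le> expectation (\<lambda>\<omega>. 1 + l * Y \<omega> + l\<^sup>2 * (Y \<omega>)\<^sup>2)"
    using exp_le_one_plus_plus_square [OF bounded]
    by (intro integral_mono) (auto simp: power_mult_distrib)
  also have "\<dots> = 1 + (l * expectation Y + l\<^sup>2 * expectation (\<lambda>\<omega>. (Y \<omega>)\<^sup>2))"
    using assms by (simp add: prob_space)
  also have "\<dots> \<le> exp (l * expectation Y + l\<^sup>2 * expectation (\<lambda>\<omega>. (Y \<omega>)\<^sup>2))"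
    by (rule exp_ge_add_one_self)
  finally show ?thesis .
qed

lemma (in prob_space) AE_eventually_not_in_of_summable:
  assumes "\<forall>\<^sub>F N in sequentially. (\<forall>i\<in>I N. A N i \<in> events) \<and> (\<Sum>i\<in>I N. prob (A N i)) \<le> g N"
    and "\<And>N. finite (I N)" and "summable g"
  shows "AE \<omega> in M. \<forall>\<^sub>F N in sequentially. \<forall>i\<in>I N. \<omega> \<notin> A N i"
proof -
  define U where "U N = (if \<forall>i\<in>I N. A N i \<in> events then \<Union>i\<in>I N. A N i else {})" for N
  have U_events: "U N \<in> events" for N
    using assms(2) by (auto simp: U_def)
  have "\<forall>\<^sub>F N in sequentially. prob (U N) \<le> g N"
    using assms(1)
  proof eventually_elim
    case (elim N)
    then have "prob (U N) \<le> (\<Sum>i\<in>I N. prob (A N i))"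
      unfolding U_def using assms(2) by (auto intro: finite_measure_subadditive_finite)
    with elim show ?case by simp
  qed
  then have "summable (\<lambda>N. prob (U N))"
    by (intro summable_comparison_test_ev [OF _ assms(3)]) (auto elim: eventually_mono)
  then have "AE \<omega> in M. \<forall>\<^sub>F N in sequentially. \<omega> \<in> space M - U N"
    using U_events by (intro borel_cantelli_AE1) (auto simp: less_top [symmetric])
  then show ?thesis
  proof (rule AE_mp, intro AE_I2 impI)
    fix \<omega> assume "\<forall>\<^sub>F N in sequentially. \<omega> \<in> space M - U N"
    with assms(1) show "\<forall>\<^sub>F N in sequentially. \<forall>i\<in>I N. \<omega> \<notin> A N i"
    proof eventually_elim
      case (elim N)
      then have "U N = (\<Union>i\<in>I N. A N i)" by (simp add: U_def)
      with elim show ?case by blast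
    qed
  qed
qed

lemma summable_linear_times_exp_neg_powr:
  fixes e a :: real
  assumes "0 < e" "0 < a"
  shows "summable (\<lambda>N::nat. (3 * real N + 1) * exp (- e * real N powr a))"
proof (rule summable_comparison_test_bigo)
  show "summable (\<lambda>N::nat. norm (real N powr - 2))"
    by (simp add: summable_real_powr_iff)
  show "(\<lambda>N::nat. (3 * real N + 1) * exp (- e * real N powr a)) \<in> O(\<lambda>N. real N powr - 2)"
    using assms by real_asymp
qed

lemma tau_mono:
  assumes "\<And>j. 1 \<le> j \<Longrightarrow> 0 < s j \<omega>"
  shows "mono (\<lambda>n. tau s n \<omega>)"
  unfolding mono_iff_le_Suc
proof
  fix n
  have "tau s (Suc n) \<omega> = tau s n \<omega> + s (Suc n) \<omega>"
    by (simp add: tau_def)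
  then show "tau s n \<omega> \<le> tau s (Suc n) \<omega>"
    using assms [of "Suc n"] by simp
qed

lemma count_set_threshold:
  assumes pos: "\<And>j. 1 \<le> j \<Longrightarrow> 0 < s j \<omega>" and exceeds: "1 < tau s m \<omega>"
  obtains c where "count_set s \<omega> = {1..c}" "c < m" "tau s c \<omega> \<le> 1" "1 < tau s (Suc c) \<omega>"
proof -
  define k where "k = (LEAST k. 1 < tau s k \<omega>)"
  have k: "1 < tau s k \<omega>" and "k \<le> m"
    using exceeds unfolding k_def by (auto intro: LeastI Least_le)
  have below: "tau s n \<omega> \<le> 1" if "n < k" for n
    using not_less_Least [OF that [unfolded k_def]] by simp
  have "k \<noteq> 0"
    using k by (cases k) (auto simp: tau_def)
  then obtain c where c: "k = Suc c" by (cases k) auto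
  have "j \<in> count_set s \<omega> \<longleftrightarrow> j \<in> {1..c}" for j
  proof
    assume "j \<in> count_set s \<omega>"
    then have "1 \<le> j" "tau s j \<omega> \<le> 1" by (auto simp: count_set_def)
    moreover have "tau s k \<omega> \<le> tau s j \<omega>" if "k \<le> j"
      using tau_mono [where s = s and \<omega> = \<omega>, OF pos] that by (auto dest: monoD)
    ultimately show "j \<in> {1..c}"
      using k c by (cases "k \<le> j") auto
  next
    assume "j \<in> {1..c}"
    then show "j \<in> count_set s \<omega>"
      using below [of j] c by (auto simp: count_set_def)
  qed
  then have "count_set s \<omega> = {1..c}" by blast
  moreover have "c < m" "tau s c \<omega> \<le> 1" "1 < tau s (Suc c) \<omega>"
    using \<open>k \<le> m\<close> below [of c] k c by auto
  ultimately show ?thesis by (rule that)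
qed

lemma count_set_bounds:
  fixes s :: "nat \<Rightarrow> 'a \<Rightarrow> real"
  assumes pos: "\<And>j. 1 \<le> j \<Longrightarrow> 0 < s j \<omega>" and N: "1 \<le> N" and \<epsilon>: "\<epsilon> \<le> 1"
    and close: "\<And>n. n \<le> 3 * N \<Longrightarrow> \<bar>tau s n \<omega> - real n / real N\<bar> < \<epsilon>"
  shows "finite (count_set s \<omega>)"
    and "\<bar>real (card (count_set s \<omega>)) / real N - 1\<bar> < \<epsilon> + 1 / real N"
    and "\<bar>tau s (card (count_set s \<omega>)) \<omega> - tau s N \<omega>\<bar> < 3 * \<epsilon> + 1 / real N"
proof -
  have "1 < tau s (3 * N) \<omega>"
    using close [of "3 * N"] N \<epsilon> by simp
  then obtain c where S: "count_set s \<omega> = {1..c}" and "c < 3 * N"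
    and below: "tau s c \<omega> \<le> 1" and above: "1 < tau s (Suc c) \<omega>"
    using count_set_threshold [where s = s and \<omega> = \<omega>, OF pos] by blast
  have "real c / real N < 1 + \<epsilon>"
    using close [of c] below \<open>c < 3 * N\<close> by simp
  moreover have "1 - \<epsilon> < real (Suc c) / real N"
    using close [of "Suc c"] above \<open>c < 3 * N\<close> by simp
  then have "1 - \<epsilon> - 1 / real N < real c / real N"
    by (simp add: add_divide_distrib)
  moreover have "0 \<le> 1 / real N" by simp
  ultimately have card: "\<bar>real c / real N - 1\<bar> < \<epsilon> + 1 / real N"
    unfolding abs_less_iff by linarith
  have "\<bar>tau s c \<omega> - real c / real N\<bar> < \<epsilon>" "\<bar>tau s N \<omega> - 1\<bar> < \<epsilon>"
    using close [of c] close [of N] \<open>c < 3 * N\<close> N by auto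
  with card have "\<bar>tau s c \<omega> - tau s N \<omega>\<bar> < 3 * \<epsilon> + 1 / real N"
    by (simp only: abs_less_iff) linarith
  with card S show "finite (count_set s \<omega>)"
    and "\<bar>real (card (count_set s \<omega>)) / real N - 1\<bar> < \<epsilon> + 1 / real N"
    and "\<bar>tau s (card (count_set s \<omega>)) \<omega> - tau s N \<omega>\<bar> < 3 * \<epsilon> + 1 / real N"
    by simp_all
qed

lemma count_set_limits:
  fixes s :: "nat \<Rightarrow> nat \<Rightarrow> 'a \<Rightarrow> real"
  assumes pos: "\<And>N j. 1 \<le> N \<Longrightarrow> 1 \<le> j \<Longrightarrow> 0 < s N j \<omega>"
    and close: "\<forall>\<epsilon>>0. \<forall>\<^sub>F N in sequentially. \<forall>n\<le>3*N. \<bar>tau (s N) n \<omega> - real n / real N\<bar> < \<epsilon>"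
  shows "(\<forall>\<^sub>F N in sequentially. finite (count_set (s N) \<omega>))
    \<and> ((\<lambda>N. real (card (count_set (s N) \<omega>)) / real N) \<longlonglongrightarrow> 1)
    \<and> ((\<lambda>N. \<bar>tau (s N) (card (count_set (s N) \<omega>)) \<omega> - tau (s N) N \<omega>\<bar>) \<longlonglongrightarrow> 0)"
proof -
  have eventually_bounds: "\<forall>\<^sub>F N in sequentially. finite (count_set (s N) \<omega>)
      \<and> \<bar>real (card (count_set (s N) \<omega>)) / real N - 1\<bar> < 2 * \<epsilon>
      \<and> \<bar>tau (s N) (card (count_set (s N) \<omega>)) \<omega> - tau (s N) N \<omega>\<bar> < 4 * \<epsilon>"
    if \<epsilon>: "0 < \<epsilon>" "\<epsilon> \<le> 1" for \<epsilon>
    using close [rule_format, OF \<epsilon>(1)] eventually_ge_at_top [of 1]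
      order_tendstoD(2) [OF lim_1_over_n \<epsilon>(1)]
  proof eventually_elim
    case (elim N)
    then show ?case
      using count_set_bounds [of "s N" \<omega> N \<epsilon>] pos \<epsilon> by fastforce
  qed
  have "\<forall>\<^sub>F N in sequentially. finite (count_set (s N) \<omega>)"
    using eventually_bounds [of 1] by (auto elim: eventually_mono)
  moreover have "((\<lambda>N. real (card (count_set (s N) \<omega>)) / real N) \<longlonglongrightarrow> 1)
      \<and> ((\<lambda>N. \<bar>tau (s N) (card (count_set (s N) \<omega>)) \<omega> - tau (s N) N \<omega>\<bar>) \<longlonglongrightarrow> 0)"
    unfolding tendsto_iff dist_real_def
  proof (intro conjI allI impI)
    fix e :: real assume "0 < e"
    then have "0 < min 1 (e / 4)" "min 1 (e / 4) \<le> 1" by auto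
    from eventually_bounds [OF this]
    show "\<forall>\<^sub>F N in sequentially. \<bar>real (card (count_set (s N) \<omega>)) / real N - 1\<bar> < e"
      and "\<forall>\<^sub>F N in sequentially. \<bar>\<bar>tau (s N) (card (count_set (s N) \<omega>)) \<omega> - tau (s N) N \<omega>\<bar> - 0\<bar> < e"
      using \<open>0 < e\<close> by (auto elim!: eventually_mono)
  qed
  ultimately show ?thesis by blast
qed

locale nsd_triangular_array = prob_space M for M :: "'a measure" +
  fixes t :: "nat \<Rightarrow> nat \<Rightarrow> 'a \<Rightarrow> real" and r C :: real
  assumes rv: "\<And>N j. 1 \<le> N \<Longrightarrow> 1 \<le> j \<Longrightarrow> t N j \<in> borel_measurable M"
    and pos: "\<And>N j \<omega>. 1 \<le> N \<Longrightarrow> 1 \<le> j \<Longrightarrow> \<omega> \<in> space M \<Longrightarrow> t N j \<omega> > 0"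
    and mean_int: "\<And>N j. 1 \<le> N \<Longrightarrow> 1 \<le> j \<Longrightarrow> integrable M (t N j)"
    and mean: "\<And>N j. 1 \<le> N \<Longrightarrow> 1 \<le> j \<Longrightarrow> (\<integral>\<omega>. t N j \<omega> \<partial>M) = 1 / real N"
    and r_pos: "r > 0" and C_pos: "C > 0"
    and mom_int: "\<And>N j. 1 \<le> N \<Longrightarrow> 1 \<le> j \<Longrightarrow> integrable M (\<lambda>\<omega>. t N j \<omega> powr (2 + r))"
    and mom: "\<And>N j. 1 \<le> N \<Longrightarrow> 1 \<le> j \<Longrightarrow>
               (\<integral>\<omega>. t N j \<omega> powr (2 + r) \<partial>M) \<le> C / real N powr (2 + r)"
    and nsd: "\<And>N m. 1 \<le> N \<Longrightarrow> nsd M (t N) {1..m}"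
begin

text \<open>Summands are truncated at \<open>N powr - \<alpha>\<close> and exponential moments are taken at
  \<open>N powr \<alpha>\<close>. This exponent makes \<open>(N powr \<alpha>)\<^sup>2 \<le> N\<close>, which keeps the Chernoff exponent
  bounded, and makes the union bound for a summand exceeding the truncation level
  \<open>O(N powr - (1 + r / 2))\<close>, which is summable.\<close>
definition \<alpha> :: real where "\<alpha> = r / (4 + 2 * r)"

lemma \<alpha>_pos: "0 < \<alpha>"
  using r_pos by (simp add: \<alpha>_def)

lemma \<alpha>_times_moment_order: "\<alpha> * (2 + r) = r / 2"
  using r_pos by (simp add: \<alpha>_def field_simps)

lemma powr_\<alpha>_square_le: "1 \<le> N \<Longrightarrow> (real N powr \<alpha>)\<^sup>2 \<le> real N"
proof -
  assume N: "1 \<le> N"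
  have "(real N powr \<alpha>)\<^sup>2 = real N powr (2 * \<alpha>)"
    by (simp add: power2_eq_square powr_add [symmetric])
  also have "\<dots> \<le> real N powr 1"
    using N r_pos by (intro powr_mono) (auto simp: \<alpha>_def field_simps)
  finally show ?thesis
    using N by simp
qed

lemma measurable_tau [measurable]: "1 \<le> N \<Longrightarrow> tau (t N) n \<in> borel_measurable M"
  unfolding tau_def [abs_def] by (intro borel_measurable_sum rv) auto

lemma second_moment:
  assumes N: "1 \<le> N" and j: "1 \<le> j"
  shows "integrable M (\<lambda>\<omega>. (t N j \<omega>)\<^sup>2)"
    and "expectation (\<lambda>\<omega>. (t N j \<omega>)\<^sup>2) \<le> (1 + C) / (real N)\<^sup>2"
proof -
  define bound where "bound \<omega> = 1 / (real N)\<^sup>2 + real N powr r * t N j \<omega> powr (2 + r)" for \<omega>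
  have bound_int: "integrable M bound"
    unfolding bound_def using mom_int [OF N j] by auto
  have le_bound: "(t N j \<omega>)\<^sup>2 \<le> bound \<omega>" if "\<omega> \<in> space M" for \<omega>
    unfolding bound_def using pos [OF N j that] N r_pos by (intro square_le_powr_moment) auto
  show sq_int: "integrable M (\<lambda>\<omega>. (t N j \<omega>)\<^sup>2)"
    using le_bound rv [OF N j]
    by (intro Bochner_Integration.integrable_bound [OF bound_int])
      (auto intro: order_trans [OF _ abs_ge_self])
  have "expectation (\<lambda>\<omega>. (t N j \<omega>)\<^sup>2) \<le> expectation bound"
    using le_bound by (intro integral_mono sq_int bound_int) auto
  also have "\<dots> = 1 / (real N)\<^sup>2 + real N powr r * (\<integral>\<omega>. t N j \<omega> powr (2 + r) \<partial>M)"
    unfolding bound_def using mom_int [OF N j] by (simp add: prob_space)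
  also have "\<dots> \<le> 1 / (real N)\<^sup>2 + real N powr r * (C / real N powr (2 + r))"
    using mom [OF N j] by (intro add_left_mono mult_left_mono) auto
  also have "real N powr r * (C / real N powr (2 + r)) = C / (real N)\<^sup>2"
    using N by (simp add: powr_add field_simps)
  finally show "expectation (\<lambda>\<omega>. (t N j \<omega>)\<^sup>2) \<le> (1 + C) / (real N)\<^sup>2"
    by (simp add: add_divide_distrib)
qed

lemma expectation_exp_summand_le:
  fixes h :: "real \<Rightarrow> real"
  assumes N: "1 \<le> N" and j: "1 \<le> j" and h: "h \<in> borel_measurable borel"
    and h_bounded: "\<And>x. l * h x \<le> 1" and h_le: "\<And>x. 0 < x \<Longrightarrow> 0 \<le> h x \<and> h x \<le> x"
    and h_mean: "l * expectation (\<lambda>\<omega>. h (t N j \<omega>)) \<le> l / real N"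
  shows "expectation (\<lambda>\<omega>. exp (l * h (t N j \<omega>))) \<le> exp (l / real N + l\<^sup>2 * (1 + C) / (real N)\<^sup>2)"
proof -
  have h_t: "0 \<le> h (t N j \<omega>) \<and> h (t N j \<omega>) \<le> t N j \<omega>" if "\<omega> \<in> space M" for \<omega>
    using h_le pos [OF N j that] by blast
  have meas: "random_variable borel (\<lambda>\<omega>. h (t N j \<omega>))"
    by (rule measurable_compose [OF rv [OF N j] h])
  have int: "integrable M (\<lambda>\<omega>. h (t N j \<omega>))"
    using h_t meas by (intro Bochner_Integration.integrable_bound [OF mean_int [OF N j]])
      (auto intro: order_trans [OF _ abs_ge_self])
  have sq_int: "integrable M (\<lambda>\<omega>. (h (t N j \<omega>))\<^sup>2)"
    using h_t meas by (intro Bochner_Integration.integrable_bound [OF second_moment(1) [OF N j]])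
      (auto intro: power_mono)
  have "expectation (\<lambda>\<omega>. (h (t N j \<omega>))\<^sup>2) \<le> expectation (\<lambda>\<omega>. (t N j \<omega>)\<^sup>2)"
    using h_t by (intro integral_mono sq_int second_moment(1) [OF N j] power_mono) auto
  also have "\<dots> \<le> (1 + C) / (real N)\<^sup>2"
    by (rule second_moment(2) [OF N j])
  finally have "l\<^sup>2 * expectation (\<lambda>\<omega>. (h (t N j \<omega>))\<^sup>2) \<le> l\<^sup>2 * (1 + C) / (real N)\<^sup>2"
    by (simp add: mult_left_mono times_divide_eq_right [symmetric] del: times_divide_eq_right)
  moreover have "expectation (\<lambda>\<omega>. exp (l * h (t N j \<omega>)))
      \<le> exp (l * expectation (\<lambda>\<omega>. h (t N j \<omega>)) + l\<^sup>2 * expectation (\<lambda>\<omega>. (h (t N j \<omega>))\<^sup>2))"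
    by (rule expectation_exp_le [OF meas int sq_int h_bounded])
  ultimately show ?thesis
    using h_mean by (auto elim!: order_trans)
qed

lemma expectation_exp_sum_le:
  fixes h :: "real \<Rightarrow> real"
  assumes N: "1 \<le> N" and h: "mono h" "h \<in> borel_measurable borel"
    and h_bounded: "\<And>x. l * h x \<le> 1" and h_le: "\<And>x. 0 < x \<Longrightarrow> 0 \<le> h x \<and> h x \<le> x"
    and h_mean: "\<And>j. 1 \<le> j \<Longrightarrow> l * expectation (\<lambda>\<omega>. h (t N j \<omega>)) \<le> l / real N"
  shows "expectation (\<lambda>\<omega>. exp (l * (\<Sum>j=1..n. h (t N j \<omega>))))
    \<le> exp (real n * (l / real N + l\<^sup>2 * (1 + C) / (real N)\<^sup>2))"
proof -
  have "expectation (\<lambda>\<omega>. exp (l * (\<Sum>j=1..n. h (t N j \<omega>))))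
      \<le> (\<Prod>j=1..n. expectation (\<lambda>\<omega>. exp (l * h (t N j \<omega>))))"
    using N h h_bounded rv by (intro nsd_expectation_exp_sum_le [OF nsd [OF N]]) auto
  also have "\<dots> \<le> (\<Prod>j=1..n. exp (l / real N + l\<^sup>2 * (1 + C) / (real N)\<^sup>2))"
    using N h(2) h_bounded h_le h_mean by (intro prod_mono conjI expectation_exp_summand_le) auto
  also have "\<dots> = exp (real n * (l / real N + l\<^sup>2 * (1 + C) / (real N)\<^sup>2))"
    by (simp add: exp_of_nat_mult)
  finally show ?thesis .
qed

lemma prob_ge_le_of_exp_moment:
  assumes N: "1 \<le> N" and n: "n \<le> 3 * N" and S: "random_variable borel S"
    and int: "integrable M (\<lambda>\<omega>. exp (real N powr \<alpha> * S \<omega>))"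
    and mgf: "expectation (\<lambda>\<omega>. exp (real N powr \<alpha> * S \<omega>))
      \<le> exp (real n * (m * real N powr \<alpha> + (real N powr \<alpha>)\<^sup>2 * (1 + C) / (real N)\<^sup>2))"
  shows "prob {\<omega>\<in>space M. real n * m + \<epsilon> \<le> S \<omega>} \<le> exp (3 * (1 + C)) * exp (- \<epsilon> * real N powr \<alpha>)"
proof -
  define l where "l = real N powr \<alpha>"
  have l: "0 < l" using N by (simp add: l_def)
  have "real n * (l\<^sup>2 * (1 + C) / (real N)\<^sup>2) \<le> (3 * real N) * (real N * (1 + C) / (real N)\<^sup>2)"
    using n powr_\<alpha>_square_le [OF N] C_pos unfolding l_def
    by (intro mult_mono divide_right_mono mult_right_mono) auto
  also have "\<dots> = 3 * (1 + C)"
    using N by (simp add: power2_eq_square)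
  finally have exponent: "real n * (l\<^sup>2 * (1 + C) / (real N)\<^sup>2) \<le> 3 * (1 + C)" .
  have "prob {\<omega>\<in>space M. real n * m + \<epsilon> \<le> S \<omega>}
      \<le> expectation (\<lambda>\<omega>. exp (l * S \<omega>)) / exp (l * (real n * m + \<epsilon>))"
    using prob_ge_le_exp_moment [OF l S] int by (simp add: l_def)
  also have "\<dots> \<le> exp (real n * (m * l + l\<^sup>2 * (1 + C) / (real N)\<^sup>2)) / exp (l * (real n * m + \<epsilon>))"
    using mgf by (intro divide_right_mono) (simp_all add: l_def)
  also have "\<dots> = exp (real n * (l\<^sup>2 * (1 + C) / (real N)\<^sup>2) - \<epsilon> * l)"
    by (simp add: exp_diff [symmetric] algebra_simps)
  also have "\<dots> \<le> exp (3 * (1 + C)) * exp (- \<epsilon> * real N powr \<alpha>)"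
    using exponent by (simp add: l_def exp_add [symmetric])
  finally show ?thesis .
qed

lemma prob_partial_sum_le:
  assumes N: "1 \<le> N" and n: "n \<le> 3 * N"
  shows "prob {\<omega>\<in>space M. tau (t N) n \<omega> \<le> real n / real N - \<epsilon>}
    \<le> exp (3 * (1 + C)) * exp (- \<epsilon> * real N powr \<alpha>)"
proof -
  define l where "l = real N powr \<alpha>"
  have l: "0 < l" using N by (simp add: l_def)
  have t_nonneg: "0 \<le> t N j \<omega>" if "1 \<le> j" "\<omega> \<in> space M" for j \<omega>
    using pos [OF N that] by simp
  have tau_eq: "tau (t N) n \<omega> = (\<Sum>j=1..n. max 0 (t N j \<omega>))" if "\<omega> \<in> space M" for \<omega>
    unfolding tau_def using t_nonneg [OF _ that] by (intro sum.cong) (auto simp: max_absorb2)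
  have mean_max: "expectation (\<lambda>\<omega>. max 0 (t N j \<omega>)) = 1 / real N" if "1 \<le> j" for j
    using t_nonneg [OF that] mean [OF N that]
    by (simp add: max_absorb2 cong: Bochner_Integration.integral_cong)
  \<comment> \<open>Clamping at 0 leaves \<open>t\<close> unchanged but bounds \<open>- l * max 0 x\<close> on all of \<open>\<real>\<close>, as the
    NSD bound requires.\<close>
  have neg_bounded: "- l * max 0 x \<le> 1" for x
  proof -
    have "0 \<le> l * max 0 x" using l by simp
    then show ?thesis by simp
  qed
  have "expectation (\<lambda>\<omega>. exp ((- l) * (\<Sum>j=1..n. max 0 (t N j \<omega>))))
      \<le> exp (real n * ((- l) / real N + (- l)\<^sup>2 * (1 + C) / (real N)\<^sup>2))"
    using N l mean_max neg_bounded by (intro expectation_exp_sum_le) (auto simp: mono_def)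
  then have mgf: "expectation (\<lambda>\<omega>. exp (l * - tau (t N) n \<omega>))
      \<le> exp (real n * ((- 1 / real N) * l + l\<^sup>2 * (1 + C) / (real N)\<^sup>2))"
    by (simp add: tau_eq cong: Bochner_Integration.integral_cong)
  have [measurable]: "tau (t N) n \<in> borel_measurable M"
    by (rule measurable_tau [OF N])
  have "0 \<le> tau (t N) n \<omega>" if "\<omega> \<in> space M" for \<omega>
    unfolding tau_def using that by (auto intro!: sum_nonneg t_nonneg)
  then have "integrable M (\<lambda>\<omega>. exp (l * - tau (t N) n \<omega>))"
    using l by (intro integrable_const_bound [where B = 1]) auto
  with mgf have "prob {\<omega>\<in>space M. real n * (- 1 / real N) + \<epsilon> \<le> - tau (t N) n \<omega>}
      \<le> exp (3 * (1 + C)) * exp (- \<epsilon> * real N powr \<alpha>)"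
    unfolding l_def by (intro prob_ge_le_of_exp_moment N n) auto
  then show ?thesis
    by (simp add: field_simps)
qed

lemma prob_truncated_sum_ge:
  assumes N: "1 \<le> N" and n: "n \<le> 3 * N"
  shows "prob {\<omega>\<in>space M. real n / real N + \<epsilon> \<le> (\<Sum>j=1..n. min (t N j \<omega>) (real N powr - \<alpha>))}
    \<le> exp (3 * (1 + C)) * exp (- \<epsilon> * real N powr \<alpha>)"
proof -
  define l where "l = real N powr \<alpha>"
  define S where "S \<omega> = (\<Sum>j=1..n. min (t N j \<omega>) (real N powr - \<alpha>))" for \<omega>
  have l: "0 < l" using N by (simp add: l_def)
  have l_min: "l * min x (real N powr - \<alpha>) \<le> 1" for x
  proof -
    have "l * min x (real N powr - \<alpha>) \<le> l * real N powr - \<alpha>"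
      using l by (intro mult_left_mono) auto
    also have "\<dots> = 1"
      using N by (simp add: l_def powr_minus)
    finally show ?thesis .
  qed
  have [measurable]: "S \<in> borel_measurable M"
    unfolding S_def using N by (intro borel_measurable_sum borel_measurable_min rv) auto
  have mean_min: "l * expectation (\<lambda>\<omega>. min (t N j \<omega>) (real N powr - \<alpha>)) \<le> l / real N"
    if "1 \<le> j" for j
  proof -
    have "expectation (\<lambda>\<omega>. min (t N j \<omega>) (real N powr - \<alpha>)) \<le> expectation (t N j)"
      using N that mean_int [OF N that]
      by (intro integral_mono Bochner_Integration.integrable_bound [OF mean_int [OF N that]])
        (auto simp: pos less_imp_le)
    then show ?thesis
      using l mean [OF N that] by (simp add: mult_left_mono divide_inverse)
  qed
  have "expectation (\<lambda>\<omega>. exp (l * S \<omega>))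
      \<le> exp (real n * (l / real N + l\<^sup>2 * (1 + C) / (real N)\<^sup>2))"
    unfolding S_def using N l_min mean_min
    by (intro expectation_exp_sum_le) (auto simp: mono_def)
  then have "expectation (\<lambda>\<omega>. exp (l * S \<omega>))
      \<le> exp (real n * (1 / real N * l + l\<^sup>2 * (1 + C) / (real N)\<^sup>2))"
    by simp
  moreover have "integrable M (\<lambda>\<omega>. exp (l * S \<omega>))"
  proof (intro integrable_const_bound [where B = "exp (real n)"] AE_I2)
    fix \<omega>
    have "l * S \<omega> \<le> (\<Sum>j=1..n. 1)"
      unfolding S_def sum_distrib_left by (intro sum_mono l_min)
    then show "norm (exp (l * S \<omega>)) \<le> exp (real n)" by simp
  qed measurable
  ultimately have "prob {\<omega>\<in>space M. real n * (1 / real N) + \<epsilon> \<le> S \<omega>}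
      \<le> exp (3 * (1 + C)) * exp (- \<epsilon> * real N powr \<alpha>)"
    unfolding l_def by (intro prob_ge_le_of_exp_moment N n) auto
  then show ?thesis
    by (simp add: S_def)
qed

lemma prob_summand_gt:
  assumes N: "1 \<le> N" and j: "1 \<le> j"
  shows "prob {\<omega>\<in>space M. real N powr - \<alpha> < t N j \<omega>} \<le> C * real N powr - (2 + r / 2)"
proof -
  define \<delta> where "\<delta> = real N powr - \<alpha>"
  have \<delta>: "0 < \<delta>" using N by (simp add: \<delta>_def)
  have [measurable]: "t N j \<in> borel_measurable M" by (rule rv [OF N j])
  have "prob {\<omega>\<in>space M. \<delta> < t N j \<omega>} \<le> prob {\<omega>\<in>space M. \<delta> powr (2 + r) \<le> t N j \<omega> powr (2 + r)}"
  proof (rule finite_measure_mono)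
    show "{\<omega>\<in>space M. \<delta> < t N j \<omega>} \<subseteq> {\<omega>\<in>space M. \<delta> powr (2 + r) \<le> t N j \<omega> powr (2 + r)}"
      using \<delta> r_pos by (auto intro: powr_mono2)
  qed measurable
  also have "\<dots> \<le> (\<integral>\<omega>. t N j \<omega> powr (2 + r) \<partial>M) / \<delta> powr (2 + r)"
    using \<delta> by (intro integral_Markov_inequality_measure [where A = "space M"] mom_int N j) auto
  also have "\<dots> \<le> (C / real N powr (2 + r)) / \<delta> powr (2 + r)"
    by (intro divide_right_mono mom N j) simp
  also have "\<delta> powr (2 + r) = real N powr - (r / 2)"
    unfolding \<delta>_def powr_powr by (simp add: \<alpha>_times_moment_order)
  also have "(C / real N powr (2 + r)) / real N powr - (r / 2)
      = C / (real N powr (2 + r) * real N powr - (r / 2))"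
    by (rule divide_divide_eq_left)
  also have "real N powr (2 + r) * real N powr - (r / 2) = real N powr (2 + r + - (r / 2))"
    by (rule powr_add [symmetric])
  also have "2 + r + - (r / 2) = 2 + r / 2"
    by simp
  also have "C / real N powr (2 + r / 2) = C * real N powr - (2 + r / 2)"
    by (simp only: powr_minus divide_inverse)
  finally show ?thesis
    unfolding \<delta>_def .
qed

lemma AE_eventually_summands_le:
  "AE \<omega> in M. \<forall>\<^sub>F N in sequentially. \<forall>j\<in>{1..3*N}. t N j \<omega> \<le> real N powr - \<alpha>"
proof -
  define A where "A N j = {\<omega>\<in>space M. real N powr - \<alpha> < t N j \<omega>}" for N j
  have "AE \<omega> in M. \<forall>\<^sub>F N in sequentially. \<forall>j\<in>{1..3*N}. \<omega> \<notin> A N j"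
  proof (rule AE_eventually_not_in_of_summable)
    show "\<forall>\<^sub>F N in sequentially. (\<forall>j\<in>{1..3*N}. A N j \<in> events)
        \<and> (\<Sum>j\<in>{1..3*N}. prob (A N j)) \<le> 3 * C * real N powr - (1 + r / 2)"
      using eventually_ge_at_top [of 1]
    proof eventually_elim
      case (elim N)
      have "(\<Sum>j\<in>{1..3*N}. prob (A N j)) \<le> (\<Sum>j\<in>{1..3*N}. C * real N powr - (2 + r / 2))"
        unfolding A_def using elim by (intro sum_mono prob_summand_gt) auto
      also have "\<dots> = 3 * C * (real N * real N powr - (2 + r / 2))"
        by simp
      also have "real N * real N powr - (2 + r / 2) = real N powr - (1 + r / 2)"
        using elim by (simp add: powr_add [symmetric] powr_mult_base)
      finally have "(\<Sum>j\<in>{1..3*N}. prob (A N j)) \<le> 3 * C * real N powr - (1 + r / 2)" .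
      moreover have "A N j \<in> events" if "j \<in> {1..3*N}" for j
      proof -
        have [measurable]: "t N j \<in> borel_measurable M"
          using elim that by (intro rv) auto
        show ?thesis unfolding A_def by measurable
      qed
      ultimately show ?case
        by auto
    qed
    show "summable (\<lambda>N. 3 * C * real N powr - (1 + r / 2))"
      using r_pos by (intro summable_mult) (simp add: summable_real_powr_iff)
  qed simp
  then show ?thesis
    using AE_space by eventually_elim (auto elim!: eventually_mono simp: A_def not_less)
qed

lemma AE_eventually_not_in_of_chernoff_bound:
  assumes \<epsilon>: "0 < \<epsilon>"
    and events: "\<And>N n. 1 \<le> N \<Longrightarrow> n \<le> 3 * N \<Longrightarrow> A N n \<in> events"
    and bound: "\<And>N n. 1 \<le> N \<Longrightarrow> n \<le> 3 * N \<Longrightarrow>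
      prob (A N n) \<le> exp (3 * (1 + C)) * exp (- \<epsilon> * real N powr \<alpha>)"
  shows "AE \<omega> in M. \<forall>\<^sub>F N in sequentially. \<forall>n\<le>3*N. \<omega> \<notin> A N n"
proof -
  define b where "b N = exp (3 * (1 + C)) * exp (- \<epsilon> * real N powr \<alpha>)" for N :: nat
  have "AE \<omega> in M. \<forall>\<^sub>F N in sequentially. \<forall>n\<in>{..3*N}. \<omega> \<notin> A N n"
  proof (rule AE_eventually_not_in_of_summable)
    show "\<forall>\<^sub>F N in sequentially. (\<forall>n\<in>{..3*N}. A N n \<in> events)
        \<and> (\<Sum>n\<in>{..3*N}. prob (A N n)) \<le> (3 * real N + 1) * b N"
      using eventually_ge_at_top [of 1]
    proof eventually_elim
      case (elim N)
      have "(\<Sum>n\<in>{..3*N}. prob (A N n)) \<le> (\<Sum>n\<in>{..3*N}. b N)"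
        unfolding b_def using elim by (intro sum_mono bound) auto
      with elim events show ?case
        by (auto simp: add.commute)
    qed
    show "summable (\<lambda>N. (3 * real N + 1) * b N)"
      using summable_mult [OF summable_linear_times_exp_neg_powr [OF \<epsilon> \<alpha>_pos], of "exp (3 * (1 + C))"]
      by (simp add: b_def algebra_simps)
  qed simp
  then show ?thesis
    by (simp only: Ball_def atMost_iff)
qed

lemma AE_eventually_partial_sums_gt:
  assumes \<epsilon>: "0 < \<epsilon>"
  shows "AE \<omega> in M. \<forall>\<^sub>F N in sequentially. \<forall>n\<le>3*N. real n / real N - \<epsilon> < tau (t N) n \<omega>"
proof -
  have "AE \<omega> in M. \<forall>\<^sub>F N in sequentially.
      \<forall>n\<le>3*N. \<omega> \<notin> {\<omega>\<in>space M. tau (t N) n \<omega> \<le> real n / real N - \<epsilon>}"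
  proof (rule AE_eventually_not_in_of_chernoff_bound [OF \<epsilon>])
    fix N n :: nat assume N: "1 \<le> N" and n: "n \<le> 3 * N"
    have [measurable]: "tau (t N) n \<in> borel_measurable M"
      by (rule measurable_tau [OF N])
    show "{\<omega>\<in>space M. tau (t N) n \<omega> \<le> real n / real N - \<epsilon>} \<in> events"
      by measurable
    show "prob {\<omega>\<in>space M. tau (t N) n \<omega> \<le> real n / real N - \<epsilon>}
        \<le> exp (3 * (1 + C)) * exp (- \<epsilon> * real N powr \<alpha>)"
      by (rule prob_partial_sum_le [OF N n])
  qed
  then show ?thesis
    using AE_space by eventually_elim (auto elim!: eventually_mono simp: not_le)
qed

lemma AE_eventually_truncated_sums_lt:
  assumes \<epsilon>: "0 < \<epsilon>"
  shows "AE \<omega> in M. \<forall>\<^sub>F N in sequentially.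
    \<forall>n\<le>3*N. (\<Sum>j=1..n. min (t N j \<omega>) (real N powr - \<alpha>)) < real n / real N + \<epsilon>"
proof -
  have "AE \<omega> in M. \<forall>\<^sub>F N in sequentially. \<forall>n\<le>3*N.
      \<omega> \<notin> {\<omega>\<in>space M. real n / real N + \<epsilon> \<le> (\<Sum>j=1..n. min (t N j \<omega>) (real N powr - \<alpha>))}"
  proof (rule AE_eventually_not_in_of_chernoff_bound [OF \<epsilon>])
    fix N n :: nat assume N: "1 \<le> N" and n: "n \<le> 3 * N"
    show "{\<omega>\<in>space M. real n / real N + \<epsilon> \<le> (\<Sum>j=1..n. min (t N j \<omega>) (real N powr - \<alpha>))} \<in> events"
      using N rv by measurable
    show "prob {\<omega>\<in>space M. real n / real N + \<epsilon> \<le> (\<Sum>j=1..n. min (t N j \<omega>) (real N powr - \<alpha>))}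
        \<le> exp (3 * (1 + C)) * exp (- \<epsilon> * real N powr \<alpha>)"
      by (rule prob_truncated_sum_ge [OF N n])
  qed
  then show ?thesis
    using AE_space by eventually_elim (auto elim!: eventually_mono simp: not_le)
qed

lemma AE_eventually_partial_sums_close:
  assumes \<epsilon>: "0 < \<epsilon>"
  shows "AE \<omega> in M. \<forall>\<^sub>F N in sequentially. \<forall>n\<le>3*N. \<bar>tau (t N) n \<omega> - real n / real N\<bar> < \<epsilon>"
  using AE_eventually_summands_le AE_eventually_partial_sums_gt [OF \<epsilon>]
    AE_eventually_truncated_sums_lt [OF \<epsilon>]
proof eventually_elim
  case (elim \<omega>)
  from elim eventually_ge_at_top [of 1]
  show ?case
  proof eventually_elim
    case (elim N)
    show ?case
    proof (intro allI impI)
      fix n assume n: "n \<le> 3 * N"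
      have "(\<Sum>j=1..n. min (t N j \<omega>) (real N powr - \<alpha>)) = tau (t N) n \<omega>"
        unfolding tau_def using elim(1) n by (intro sum.cong) auto
      then show "\<bar>tau (t N) n \<omega> - real n / real N\<bar> < \<epsilon>"
        using elim(2,3) n by (auto simp: abs_less_iff)
    qed
  qed
qed

lemma AE_partial_sums_uniform:
  "AE \<omega> in M. \<forall>\<epsilon>>0. \<forall>\<^sub>F N in sequentially. \<forall>n\<le>3*N. \<bar>tau (t N) n \<omega> - real n / real N\<bar> < \<epsilon>"
proof -
  have "AE \<omega> in M. \<forall>k::nat. \<forall>\<^sub>F N in sequentially.
      \<forall>n\<le>3*N. \<bar>tau (t N) n \<omega> - real n / real N\<bar> < 1 / real (Suc k)"
    unfolding AE_all_countable by (intro allI AE_eventually_partial_sums_close) simp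
  then show ?thesis
  proof eventually_elim
    case (elim \<omega>)
    show ?case
    proof (intro allI impI)
      fix \<epsilon> :: real assume "0 < \<epsilon>"
      then obtain k where k: "1 / real (Suc k) < \<epsilon>" by (rule nat_approx_posE)
      show "\<forall>\<^sub>F N in sequentially. \<forall>n\<le>3*N. \<bar>tau (t N) n \<omega> - real n / real N\<bar> < \<epsilon>"
        using elim [rule_format, of k] by eventually_elim (use k in force)
    qed
  qed
qed

end

theorem lemma4p4:
  fixes M :: "'a measure" and t :: "nat \<Rightarrow> nat \<Rightarrow> 'a \<Rightarrow> real"
    and r C :: real
  assumes "prob_space M"
    and rv: "\<And>N j. 1 \<le> N \<Longrightarrow> 1 \<le> j \<Longrightarrow> t N j \<in> borel_measurable M"
    and pos: "\<And>N j \<omega>. 1 \<le> N \<Longrightarrow> 1 \<le> j \<Longrightarrow> \<omega> \<in> space M \<Longrightarrow> t N j \<omega> > 0"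
    and mean_int: "\<And>N j. 1 \<le> N \<Longrightarrow> 1 \<le> j \<Longrightarrow> integrable M (t N j)"
    and mean: "\<And>N j. 1 \<le> N \<Longrightarrow> 1 \<le> j \<Longrightarrow> (\<integral>\<omega>. t N j \<omega> \<partial>M) = 1 / real N"
    and r_pos: "r > 0" and C_pos: "C > 0"
    and mom_int: "\<And>N j. 1 \<le> N \<Longrightarrow> 1 \<le> j \<Longrightarrow> integrable M (\<lambda>\<omega>. t N j \<omega> powr (2 + r))"
    and mom: "\<And>N j. 1 \<le> N \<Longrightarrow> 1 \<le> j \<Longrightarrow>
               (\<integral>\<omega>. t N j \<omega> powr (2 + r) \<partial>M) \<le> C / real N powr (2 + r)"
    and nsd: "\<And>N m. 1 \<le> N \<Longrightarrow> nsd M (t N) {1..m}"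
  shows "AE \<omega> in M.
           (\<forall>\<^sub>F N in sequentially. finite (count_set (t N) \<omega>))
         \<and> ((\<lambda>N. real (card (count_set (t N) \<omega>)) / real N) \<longlonglongrightarrow> 1)
         \<and> ((\<lambda>N. \<bar>tau (t N) (card (count_set (t N) \<omega>)) \<omega> - tau (t N) N \<omega>\<bar>) \<longlonglongrightarrow> 0)"
proof -
  interpret nsd_triangular_array M t r C
    by (intro nsd_triangular_array.intro nsd_triangular_array_axioms.intro) (fact assms)+
  show ?thesis
    using AE_partial_sums_uniform AE_space
  proof eventually_elim
    case (elim \<omega>)
    then show ?case
      using pos by (intro count_set_limits [where s = t]) auto
  qed
qed

end
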